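(* Fix a learning dynamic over $n$ actions with conversion function $f:\mathbb{R}^n\to\Delta^n$, and let $\mathbf{x}^{*,a},\mathbf{x}^{*,b}\in\mathbb{R}^n$. Let $S^a$ and $S^b$ be its learning operators with shifts $\mathbf{x}^{*,a}$ and $\mathbf{x}^{*,b}$ respectively. Then $S^a$ is passive (resp. lossless) via a storage function $L^a(\mathbf{q})$ if and only if $S^b$ is passive (resp. lossless) via the storage function $L^a(\mathbf{q})-\langle \mathbf{x}^{*,b}-\mathbf{x}^{*,a},\mathbf{q}\rangle+c$, where $c$ is any real constant.
   Context: $\Delta^n=\{\mathbf{x}\in\mathbb{R}^n: x_j\ge 0,\ \sum_j x_j=1\}$. A learning dynamic over $n$ actions is specified by a conversion function $f:\mathbb{R}^n\to\Delta^n$: given an initial state $\mathbf{q}^0\in\mathbb{R}^n$ and an input (payoff) function $\mathbf{p}:[0,\infty)\to\mathbb{R}^n$ that is square integrable on every bounded interval, its state is $\mathbf{q}(t)=\mathbf{q}^0+\int_0^t\mathbf{p}(\tau)\,d\tau$ and its output strategy is $\mathbf{x}(t)=f(\mathbf{q}(t))$. For $\mathbf{x}^*\in\mathbb{R}^n$, the learning operator with shift $\mathbf{x}^*$ has state $\mathbf{q}$, input $\mathbf{p}$, output $\mathbf{x}-\mathbf{x}^*$. It is passive via a storage function $L:\mathbb{R}^n\to\mathbb{R}$ if for every initial state $\mathbf{q}^0$, every input $\mathbf{p}$ and every $t\ge0$, $L(\mathbf{q}(t))\le L(\mathbf{q}^0)+\int_0^t\langle\mathbf{p}(\tau),\mathbf{x}(\tau)-\mathbf{x}^*\rangle\,d\tau$,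 and lossless via $L$ if equality always holds. *)

theory Defs
  imports "HOL-Analysis.Analysis"
begin

definition prob_simplex :: "(real^'n) set" where
  "prob_simplex = {x. (\<forall>j. 0 \<le> x $ j) \<and> (\<Sum>j\<in>UNIV. x $ j) = 1}"

text \<open>Admissible inputs: p : [0,oo) -> R^n square integrable on every bounded interval
  (values of p at negative times are irrelevant).\<close>
definition sq_integrable_on :: "(real \<Rightarrow> real^'n) \<Rightarrow> real set \<Rightarrow> bool" where
  "sq_integrable_on p S \<longleftrightarrow> p measurable_on S \<and> (\<lambda>\<tau>. (norm (p \<tau>))\<^sup>2) integrable_on S"

definition admissible_input :: "(real \<Rightarrow> real^'n) \<Rightarrow> bool" where
  "admissible_input p \<longleftrightarrow> (\<forall>a b. 0 \<le> a \<longrightarrow> sq_integrable_on p {a..b})"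

definition ld_state :: "real^'n \<Rightarrow> (real \<Rightarrow> real^'n) \<Rightarrow> real \<Rightarrow> real^'n" where
  "ld_state q0 p t = q0 + integral {0..t} p"

definition ld_output :: "(real^'n \<Rightarrow> real^'n) \<Rightarrow> real^'n \<Rightarrow> (real \<Rightarrow> real^'n) \<Rightarrow> real \<Rightarrow> real^'n" where
  "ld_output f q0 p t = f (ld_state q0 p t)"

text \<open>Learning operator with shift xs (state q, input p, output x - xs) passive via L.
  The supply integral int_0^t <p, x - xs> is required to exist.\<close>
definition passive_via :: "(real^'n \<Rightarrow> real^'n) \<Rightarrow> real^'n \<Rightarrow> (real^'n \<Rightarrow> real) \<Rightarrow> bool" where
  "passive_via f xs L \<longleftrightarrow>
     (\<forall>q0 p t. admissible_input p \<longrightarrow> 0 \<le> t \<longrightarrow>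
        (\<exists>I. ((\<lambda>\<tau>. inner (p \<tau>) (ld_output f q0 p \<tau> - xs)) has_integral I) {0..t}
             \<and> L (ld_state q0 p t) \<le> L q0 + I))"

definition lossless_via :: "(real^'n \<Rightarrow> real^'n) \<Rightarrow> real^'n \<Rightarrow> (real^'n \<Rightarrow> real) \<Rightarrow> bool" where
  "lossless_via f xs L \<longleftrightarrow>
     (\<forall>q0 p t. admissible_input p \<longrightarrow> 0 \<le> t \<longrightarrow>
        (\<exists>I. ((\<lambda>\<tau>. inner (p \<tau>) (ld_output f q0 p \<tau> - xs)) has_integral I) {0..t}
             \<and> L (ld_state q0 p t) = L q0 + I))"

end

theory Submission
  imports Defs
begin

text \<open>Moving the shift from \<open>xa\<close> to \<open>xb\<close> lowers the supply rate \<open>\<langle>p, x - xa\<rangle>\<close> by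
  \<open>\<langle>p, xb - xa\<rangle>\<close>, whose integral over \<open>[0, t]\<close> is \<open>\<langle>q(t) - q(0), xb - xa\<rangle>\<close>. The new
  storage function decreases by exactly this amount between \<open>q(0)\<close> and \<open>q(t)\<close>, so both
  sides of the dissipation inequality (or equality) move by the same constant.\<close>

lemma sq_integrable_on_imp_integrable_on:
  fixes p :: "real \<Rightarrow> real^'n"
  assumes "sq_integrable_on p {a..b}"
  shows "p integrable_on {a..b}"
proof -
  have p_measurable_on: "p measurable_on {a..b}" and sq: "(\<lambda>\<tau>. (norm (p \<tau>))\<^sup>2) integrable_on {a..b}"
    using assms unfolding sq_integrable_on_def by auto
  have measurable: "p \<in> borel_measurable (lebesgue_on {a..b})"
    by (rule measurable_on_imp_borel_measurable_lebesgue[OF p_measurable_on]) auto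
  have bound_integrable: "(\<lambda>\<tau>. 1 + (norm (p \<tau>))\<^sup>2) integrable_on {a..b}"
    by (rule integrable_add[OF integrable_const_ivl sq])
  have "norm (p \<tau>) \<le> 1 + (norm (p \<tau>))\<^sup>2" for \<tau>
  proof -
    have "0 \<le> (norm (p \<tau>) - 1)\<^sup>2"
      by simp
    then have "2 * norm (p \<tau>) \<le> 1 + (norm (p \<tau>))\<^sup>2"
      by (simp add: power2_eq_square algebra_simps)
    then show ?thesis
      using norm_ge_zero[of "p \<tau>"] by linarith
  qed
  then show ?thesis
    by (intro measurable_bounded_by_integrable_imp_integrable[OF measurable bound_integrable]) auto
qed

lemma admissible_input_integrable_on:
  assumes "admissible_input p"
  shows "p integrable_on {0..t}"
  using assms sq_integrable_on_imp_integrable_on unfolding admissible_input_def by blast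

lemma has_integral_inner_shift_iff:
  fixes p y :: "real \<Rightarrow> 'a::euclidean_space"
  assumes "p integrable_on S"
  shows "((\<lambda>\<tau>. inner (p \<tau>) (y \<tau> - xa)) has_integral I) S \<longleftrightarrow>
         ((\<lambda>\<tau>. inner (p \<tau>) (y \<tau> - xb)) has_integral (I - inner (integral S p) (xb - xa))) S"
proof -
  have shift: "((\<lambda>\<tau>. inner (p \<tau>) (xb - xa)) has_integral inner (integral S p) (xb - xa)) S"
    using integrable_integral[OF integrable_component[OF assms]] integral_component_eq[OF assms]
    by simp
  have pointwise: "inner (p \<tau>) (y \<tau> - xb) = inner (p \<tau>) (y \<tau> - xa) - inner (p \<tau>) (xb - xa)" for \<tau>
    by (simp add: inner_diff_right)
  show ?thesis
  proof
    assume "((\<lambda>\<tau>. inner (p \<tau>) (y \<tau> - xa)) has_integral I) S"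
    from has_integral_diff[OF this shift]
    show "((\<lambda>\<tau>. inner (p \<tau>) (y \<tau> - xb)) has_integral (I - inner (integral S p) (xb - xa))) S"
      by (simp only: pointwise)
  next
    assume "((\<lambda>\<tau>. inner (p \<tau>) (y \<tau> - xb)) has_integral (I - inner (integral S p) (xb - xa))) S"
    from has_integral_add[OF this shift]
    show "((\<lambda>\<tau>. inner (p \<tau>) (y \<tau> - xa)) has_integral I) S"
      by (simp add: pointwise)
  qed
qed

lemma supply_shift_iff:
  fixes f :: "real^'n \<Rightarrow> real^'n" and R :: "real \<Rightarrow> real \<Rightarrow> bool"
  assumes R_translation: "\<And>u v d. R (u + d) (v + d) \<longleftrightarrow> R u v"
    and "admissible_input p"
  shows "(\<exists>I. ((\<lambda>\<tau>. inner (p \<tau>) (ld_output f q0 p \<tau> - xa)) has_integral I) {0..t}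
              \<and> R (La (ld_state q0 p t)) (La q0 + I))
     \<longleftrightarrow> (\<exists>J. ((\<lambda>\<tau>. inner (p \<tau>) (ld_output f q0 p \<tau> - xb)) has_integral J) {0..t}
              \<and> R (La (ld_state q0 p t) - inner (xb - xa) (ld_state q0 p t) + c)
                  (La q0 - inner (xb - xa) q0 + c + J))"
    (is "(\<exists>I. ?supply_a I \<and> ?dissip_a I) \<longleftrightarrow> (\<exists>J. ?supply_b J \<and> ?dissip_b J)")
proof -
  define \<delta> where "\<delta> = inner (integral {0..t} p) (xb - xa)"
  define d where "d = c - inner (xb - xa) q0 - \<delta>"
  have state_increment: "inner (xb - xa) (ld_state q0 p t) = inner (xb - xa) q0 + \<delta>"
    unfolding ld_state_def \<delta>_def inner_add_right by (simp add: inner_commute)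
  have supply_eq: "?supply_a I \<longleftrightarrow> ?supply_b (I - \<delta>)" for I
    unfolding \<delta>_def
    by (rule has_integral_inner_shift_iff[OF admissible_input_integrable_on[OF assms(2)]])
  have dissip_eq: "?dissip_b (I - \<delta>) \<longleftrightarrow> ?dissip_a I" for I
  proof -
    have "?dissip_b (I - \<delta>) \<longleftrightarrow> R (La (ld_state q0 p t) + d) (La q0 + I + d)"
      using state_increment by (intro arg_cong2[where f = R]) (simp_all add: d_def)
    then show ?thesis
      using R_translation by simp
  qed
  have reindex: "(\<exists>I. Q (I - \<delta>)) \<longleftrightarrow> (\<exists>J. Q J)" for Q :: "real \<Rightarrow> bool"
  proof
    assume "\<exists>J. Q J"
    then obtain J where "Q J" ..
    then have "Q ((J + \<delta>) - \<delta>)"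
      by simp
    then show "\<exists>I. Q (I - \<delta>)" ..
  qed blast
  have "(\<exists>I. ?supply_a I \<and> ?dissip_a I) \<longleftrightarrow> (\<exists>I. ?supply_b (I - \<delta>) \<and> ?dissip_b (I - \<delta>))"
    by (simp only: supply_eq dissip_eq)
  also have "\<dots> \<longleftrightarrow> (\<exists>J. ?supply_b J \<and> ?dissip_b J)"
    by (rule reindex)
  finally show ?thesis .
qed

theorem proposition3p4:
  fixes f :: "real^'n \<Rightarrow> real^'n" and xa xb :: "real^'n"
    and La :: "real^'n \<Rightarrow> real" and c :: real
  assumes "\<forall>q. f q \<in> prob_simplex"
  shows "(passive_via f xa La \<longleftrightarrow>
            passive_via f xb (\<lambda>q. La q - inner (xb - xa) q + c))
       \<and> (lossless_via f xa La \<longleftrightarrow>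
            lossless_via f xb (\<lambda>q. La q - inner (xb - xa) q + c))"
proof -
  let ?Lb = "\<lambda>q. La q - inner (xb - xa) q + c"
  have "passive_via f xa La \<longleftrightarrow> passive_via f xb ?Lb"
    unfolding passive_via_def
    by (intro all_cong1 imp_cong refl supply_shift_iff[where R = "(\<le>)"]) simp_all
  moreover have "lossless_via f xa La \<longleftrightarrow> lossless_via f xb ?Lb"
    unfolding lossless_via_def
    by (intro all_cong1 imp_cong refl supply_shift_iff[where R = "(=)"]) simp_all
  ultimately show ?thesis
    by blast
qed

end
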